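(* For any integers $s,k\geq 2$, we have $\chi(\overline{K}(sk,k))\leq h_o(\overline{K}(sk,k))$, and $\overline{K}(sk,k)$ contains a strongly $1$-shallow $K_t$-minor with $t=\chi(\overline{K}(sk,k))$.
   Context: For integers $n\ge 2k\ge 4$, $\overline{K}(n,k)$ is the complement of the Kneser graph: its vertices are the $k$-element subsets of $[n]=\{1,\dots,n\}$, two distinct ones adjacent iff they intersect. $\chi$ is chromatic number. A $K_t$-minor of a graph $G$ is given by $t$ pairwise vertex-disjoint connected subgraphs (bags), any two joined by an edge of $G$. A star is $K_{1,s}$, $s\ge1$. A $K_t$-minor is strongly $1$-shallow if each bag is a single vertex or a star, and every two bags are joined by an edge each of whose endpoints is either the unique vertex of a single-vertex bag or a leaf of a star bag. Signed graphs: $(G,\sigma)$ with $\sigma:E(G)\to\{+,-\}$; switching at $x$ flips signs of edges at $x$. $(H,\pi)$ is a minor of $(G,\sigma)$ if for some $\tau$ switching equivalent to $\sigma$ there are disjoint subgraphs $B_x$ ($x\in V(H)$) whose $\tau$-positive edges span each $B_x$ connectedly, and for each edge $xy$ of $H$ an edge $uv$ with $u\in B_x,v\in B_y$ and $\tau(uv)=\pi(xy)$. $h_o(G)$ is the largest $t$ such that $(K_t,-)$ (all edges negative) is a minor of $(G,-)$. *)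

theory Defs
  imports Main
begin

text \<open>Simple graphs are given by a vertex set V and a symmetric irreflexive
adjacency relation E.\<close>

definition kneser_compl_vertices :: "nat \<Rightarrow> nat \<Rightarrow> nat set set" where
  "kneser_compl_vertices n k = {A. A \<subseteq> {1..n} \<and> card A = k}"

definition kneser_compl_adj :: "nat set \<Rightarrow> nat set \<Rightarrow> bool" where
  "kneser_compl_adj A B \<longleftrightarrow> A \<noteq> B \<and> A \<inter> B \<noteq> {}"

definition proper_colouring :: "'a set \<Rightarrow> ('a \<Rightarrow> 'a \<Rightarrow> bool) \<Rightarrow> nat \<Rightarrow> ('a \<Rightarrow> nat) \<Rightarrow> bool" where
  "proper_colouring V E c f \<longleftrightarrow>
     (\<forall>v\<in>V. f v < c) \<and> (\<forall>u\<in>V. \<forall>v\<in>V. E u v \<longrightarrow> f u \<noteq> f v)"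

definition chromatic_number :: "'a set \<Rightarrow> ('a \<Rightarrow> 'a \<Rightarrow> bool) \<Rightarrow> nat" where
  "chromatic_number V E = (LEAST c. \<exists>f. proper_colouring V E c f)"

definition connected_in :: "'a set \<Rightarrow> ('a \<Rightarrow> 'a \<Rightarrow> bool) \<Rightarrow> bool" where
  "connected_in S R \<longleftrightarrow> S \<noteq> {} \<and>
     (\<forall>u\<in>S. \<forall>v\<in>S. (\<lambda>a b. a \<in> S \<and> b \<in> S \<and> R a b)\<^sup>*\<^sup>* u v)"

text \<open>Signs: True = positive, False = negative. Switching at the vertex set
{x. s x} turns the signature sigma into the signature switched_sign sigma s.\<close>
definition switched_sign :: "('a \<Rightarrow> 'a \<Rightarrow> bool) \<Rightarrow> ('a \<Rightarrow> bool) \<Rightarrow> 'a \<Rightarrow> 'a \<Rightarrow> bool" where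
  "switched_sign \<sigma> s u v \<longleftrightarrow> (\<sigma> u v \<longleftrightarrow> (s u \<longleftrightarrow> s v))"

definition signed_minor ::
  "'b set \<Rightarrow> ('b \<Rightarrow> 'b \<Rightarrow> bool) \<Rightarrow> ('b \<Rightarrow> 'b \<Rightarrow> bool) \<Rightarrow>
   'a set \<Rightarrow> ('a \<Rightarrow> 'a \<Rightarrow> bool) \<Rightarrow> ('a \<Rightarrow> 'a \<Rightarrow> bool) \<Rightarrow> bool" where
  "signed_minor VH EH \<pi> VG EG \<sigma> \<longleftrightarrow>
    (\<exists>s B. (\<forall>x\<in>VH. B x \<subseteq> VG \<and>
                     connected_in (B x) (\<lambda>u v. EG u v \<and> switched_sign \<sigma> s u v)) \<and>
           (\<forall>x\<in>VH. \<forall>y\<in>VH. x \<noteq> y \<longrightarrow> B x \<inter> B y = {}) \<and>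
           (\<forall>x\<in>VH. \<forall>y\<in>VH. EH x y \<longrightarrow>
               (\<exists>u\<in>B x. \<exists>v\<in>B y. EG u v \<and> switched_sign \<sigma> s u v = \<pi> x y)))"

definition odd_hadwiger :: "'a set \<Rightarrow> ('a \<Rightarrow> 'a \<Rightarrow> bool) \<Rightarrow> nat" where
  "odd_hadwiger V E = (GREATEST t.
     signed_minor {..<t} (\<lambda>x y. x \<noteq> y) (\<lambda>_ _. False) V E (\<lambda>_ _. False))"

text \<open>Bag i consists of a vertex c i and a set
L i of leaves; L i = {} means a single-vertex bag {c i}, otherwise the bag is the
star with centre c i and leaves L i (so s = card (L i) \<ge> 1).\<close>
definition bag_ports :: "'a \<Rightarrow> 'a set \<Rightarrow> 'a set" where
  "bag_ports c L = (if L = {} then {c} else L)"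

definition strongly_1_shallow_minor :: "'a set \<Rightarrow> ('a \<Rightarrow> 'a \<Rightarrow> bool) \<Rightarrow> nat \<Rightarrow> bool" where
  "strongly_1_shallow_minor V E t \<longleftrightarrow>
    (\<exists>(c :: nat \<Rightarrow> 'a) (L :: nat \<Rightarrow> 'a set).
       (\<forall>i<t. c i \<in> V \<and> L i \<subseteq> V \<and> finite (L i) \<and> c i \<notin> L i \<and> (\<forall>l\<in>L i. E (c i) l)) \<and>
       (\<forall>i<t. \<forall>j<t. i \<noteq> j \<longrightarrow> (insert (c i) (L i)) \<inter> (insert (c j) (L j)) = {}) \<and>
       (\<forall>i<t. \<forall>j<t. i \<noteq> j \<longrightarrow>
          (\<exists>u\<in>bag_ports (c i) (L i). \<exists>v\<in>bag_ports (c j) (L j). E u v)))"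

end

theory Submission
  imports Defs "HOL-Library.Disjoint_Sets"
begin

(* By Baranyai's theorem the k-subsets of {1..sk} split into M = (sk-1 choose k-1) perfect
   matchings, each a partition of {1..sk} into s blocks. Such a matching is an independent set of
   the complement of the Kneser graph, so its chromatic number is at most M. On the other hand the
   M k-sets containing 1 form a clique, and a clique of size t is a K_t-minor with single-vertex
   bags: it is strongly 1-shallow, and without any switching it is also an all-negative minor of
   (G, -). Hence chi <= M <= h_o, and the clique yields the required shallow minor.

   Baranyai's theorem is proved by the classical induction on m. After step m there are M rows,
   each an ordered partition of {1..m} into s possibly empty parts, in which every S occurs exactly
   as often as S is the trace on {1..m} of a k-subset of {1..sk}. To add m+1, every row puts it
   into one of its parts; a choice respecting the required multiplicities exists by Hall's theorem
   with capacities, whose Hall condition follows from double counting the deficits k - |S|. *)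

section \<open>Hall's theorem with capacities\<close>

lemma hall_condition_residual:
  fixes J :: "'a set" and N :: "'a \<Rightarrow> 'b set" and d :: "'b \<Rightarrow> nat"
  assumes "finite J"
    and hall: "\<And>X. X \<subseteq> J \<Longrightarrow> card X \<le> sum d (\<Union>(N ` X))"
    and "X \<subseteq> J" and tight: "sum d (\<Union>(N ` X)) \<le> card X"
    and "Y \<subseteq> J - X"
  shows "card Y \<le> sum d (\<Union>j\<in>Y. N j - \<Union>(N ` X))"
proof -
  have fin_X: "finite X" and fin_Y: "finite Y"
    using assms(3,5) \<open>finite J\<close> finite_subset by blast+
  have fin_N: "finite (N j)" if "j \<in> J" for j
  proof -
    have "sum d (N j) \<noteq> 0"
      using hall[of "{j}"] that by simp
    then show ?thesis
      by (meson sum.infinite)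
  qed
  have fin_UN: "finite (\<Union>(N ` Z))" if "Z \<subseteq> J" for Z
    using that fin_N finite_subset[OF that \<open>finite J\<close>] by auto
  have "card X + card Y = card (X \<union> Y)"
    using assms(5) fin_X fin_Y by (subst card_Un_disjoint) auto
  also have "\<dots> \<le> sum d (\<Union>(N ` (X \<union> Y)))"
    using assms(3,5) by (intro hall) auto
  also have "\<Union>(N ` (X \<union> Y)) = \<Union>(N ` X) \<union> (\<Union>j\<in>Y. N j - \<Union>(N ` X))"
    by auto
  also have "sum d \<dots> = sum d (\<Union>(N ` X)) + sum d (\<Union>j\<in>Y. N j - \<Union>(N ` X))"
    using assms(3,5) fin_UN[of X] fin_UN[of Y] by (intro sum.union_disjoint) (auto intro: finite_subset)
  finally show ?thesis
    using tight by linarith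
qed

lemma hall_condition_reduced_capacity:
  fixes J :: "'a set" and N :: "'a \<Rightarrow> 'b set" and d :: "'b \<Rightarrow> nat"
  assumes slack: "\<And>X. X \<subseteq> J \<Longrightarrow> X \<noteq> {} \<Longrightarrow> X \<noteq> J \<Longrightarrow> card X < sum d (\<Union>(N ` X))"
    and "j\<^sub>0 \<in> J" and "y \<in> N j\<^sub>0" and "X \<subseteq> J - {j\<^sub>0}"
  shows "card X \<le> sum (d(y := d y - 1)) (\<Union>(N ` X))"
proof (cases "X = {}")
  case False
  have strict: "card X < sum d (\<Union>(N ` X))"
    using slack[of X] False assms(2,4) by auto
  then have fin_N: "finite (\<Union>(N ` X))"
    by (metis not_less0 sum.infinite)
  have "sum d (\<Union>(N ` X)) \<le> sum (d(y := d y - 1)) (\<Union>(N ` X)) + 1"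
  proof (cases "y \<in> \<Union>(N ` X)")
    case True
    have "sum (d(y := d y - 1)) (\<Union>(N ` X) - {y}) = sum d (\<Union>(N ` X) - {y})"
      by (intro sum.cong) auto
    then show ?thesis
      using sum.remove[OF fin_N True, of d] sum.remove[OF fin_N True, of "d(y := d y - 1)"]
      by simp
  next
    case False
    then have "sum (d(y := d y - 1)) (\<Union>(N ` X)) = sum d (\<Union>(N ` X))"
      by (intro sum.cong) auto
    then show ?thesis
      by simp
  qed
  then show ?thesis
    using strict by linarith
qed simp

definition capacitated_transversal :: "'a set \<Rightarrow> ('a \<Rightarrow> 'b set) \<Rightarrow> ('b \<Rightarrow> nat) \<Rightarrow> ('a \<Rightarrow> 'b) \<Rightarrow> bool" where
  "capacitated_transversal J N d \<phi> \<longleftrightarrow> (\<forall>j\<in>J. \<phi> j \<in> N j) \<and> (\<forall>y. card {j\<in>J. \<phi> j = y} \<le> d y)"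

lemma capacitated_transversalD:
  assumes "capacitated_transversal J N d \<phi>"
  shows "\<forall>j\<in>J. \<phi> j \<in> N j" and "\<forall>y. card {j\<in>J. \<phi> j = y} \<le> d y"
  using assms by (simp_all add: capacitated_transversal_def)

lemma capacitated_transversal_Un:
  assumes "finite J" and "X \<subseteq> J"
    and "capacitated_transversal X N d \<phi>\<^sub>1"
    and "capacitated_transversal (J - X) (\<lambda>j. N j - \<Union>(N ` X)) d \<phi>\<^sub>2"
  shows "capacitated_transversal J N d (\<lambda>j. if j \<in> X then \<phi>\<^sub>1 j else \<phi>\<^sub>2 j)"
proof -
  let ?\<phi> = "\<lambda>j. if j \<in> X then \<phi>\<^sub>1 j else \<phi>\<^sub>2 j"
  note \<phi>\<^sub>1 = capacitated_transversalD[OF assms(3)] and \<phi>\<^sub>2 = capacitated_transversalD[OF assms(4)]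
  have "finite X"
    using assms(1,2) finite_subset by blast
  have "card {j\<in>J. ?\<phi> j = y} \<le> d y" for y
  proof (cases "y \<in> \<Union>(N ` X)")
    case True
    then have "{j\<in>J. ?\<phi> j = y} \<subseteq> {j\<in>X. \<phi>\<^sub>1 j = y}"
      using \<phi>\<^sub>2(1) by fastforce
    then have "card {j\<in>J. ?\<phi> j = y} \<le> card {j\<in>X. \<phi>\<^sub>1 j = y}"
      using \<open>finite X\<close> by (intro card_mono) auto
    then show ?thesis
      using \<phi>\<^sub>1(2) le_trans by blast
  next
    case False
    then have "{j\<in>J. ?\<phi> j = y} \<subseteq> {j\<in>J - X. \<phi>\<^sub>2 j = y}"
      using \<phi>\<^sub>1(1) by fastforce
    then have "card {j\<in>J. ?\<phi> j = y} \<le> card {j\<in>J - X. \<phi>\<^sub>2 j = y}"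
      using assms(1) by (intro card_mono) auto
    then show ?thesis
      using \<phi>\<^sub>2(2) le_trans by blast
  qed
  moreover have "\<forall>j\<in>J. ?\<phi> j \<in> N j"
    using \<phi>\<^sub>1(1) \<phi>\<^sub>2(1) by simp
  ultimately show ?thesis
    by (simp add: capacitated_transversal_def)
qed

lemma capacitated_transversal_insert:
  assumes "finite J" and "j\<^sub>0 \<in> J" and "y \<in> N j\<^sub>0" and "d y > 0"
    and \<phi>: "capacitated_transversal (J - {j\<^sub>0}) N (d(y := d y - 1)) \<phi>"
  shows "capacitated_transversal J N d (\<phi>(j\<^sub>0 := y))"
  unfolding capacitated_transversal_def
proof (intro conjI allI)
  show "\<forall>j\<in>J. (\<phi>(j\<^sub>0 := y)) j \<in> N j"
    using \<phi> assms(3) by (simp add: capacitated_transversal_def)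
  fix z
  have fibre: "card {j\<in>J - {j\<^sub>0}. \<phi> j = z} \<le> (d(y := d y - 1)) z"
    using \<phi> by (simp add: capacitated_transversal_def)
  show "card {j\<in>J. (\<phi>(j\<^sub>0 := y)) j = z} \<le> d z"
  proof (cases "z = y")
    case True
    have "card {j\<in>J. (\<phi>(j\<^sub>0 := y)) j = z} \<le> card (insert j\<^sub>0 {j\<in>J - {j\<^sub>0}. \<phi> j = z})"
      using assms(1) by (intro card_mono) auto
    also have "\<dots> = Suc (card {j\<in>J - {j\<^sub>0}. \<phi> j = z})"
      using assms(1) by simp
    also have "\<dots> \<le> d z"
      using fibre \<open>d y > 0\<close> True by simp
    finally show ?thesis .
  next
    case False
    have "card {j\<in>J. (\<phi>(j\<^sub>0 := y)) j = z} \<le> card {j\<in>J - {j\<^sub>0}. \<phi> j = z}"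
      using assms(1) False by (intro card_mono) auto
    also have "\<dots> \<le> d z"
      using fibre False by simp
    finally show ?thesis .
  qed
qed

theorem hall_capacities:
  fixes J :: "'a set" and N :: "'a \<Rightarrow> 'b set" and d :: "'b \<Rightarrow> nat"
  assumes "finite J" and "\<And>X. X \<subseteq> J \<Longrightarrow> card X \<le> sum d (\<Union>(N ` X))"
  shows "\<exists>\<phi>. capacitated_transversal J N d \<phi>"
  using assms
proof (induction "card J" arbitrary: J N d rule: less_induct)
  case less
  note hall = less.prems(2)
  consider (empty) "J = {}"
    | (tight) X where "X \<subseteq> J" "X \<noteq> {}" "X \<noteq> J" "sum d (\<Union>(N ` X)) \<le> card X"
    | (slack) "J \<noteq> {}" "\<And>X. X \<subseteq> J \<Longrightarrow> X \<noteq> {} \<Longrightarrow> X \<noteq> J \<Longrightarrow> card X < sum d (\<Union>(N ` X))"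
    by (meson not_le)
  then show ?case
  proof cases
    case empty
    then show ?thesis
      unfolding capacitated_transversal_def by simp
  next
    case tight
    have "card X < card J" and "card (J - X) < card J"
      using tight less.prems(1) by (auto intro: psubset_card_mono)
    moreover have "finite X"
      using tight(1) less.prems(1) finite_subset by blast
    ultimately have "\<exists>\<phi>\<^sub>1. capacitated_transversal X N d \<phi>\<^sub>1"
      by (intro less.hyps) (use hall tight(1) in auto)
    moreover have "\<exists>\<phi>\<^sub>2. capacitated_transversal (J - X) (\<lambda>j. N j - \<Union>(N ` X)) d \<phi>\<^sub>2"
      using \<open>card (J - X) < card J\<close> less.prems(1) hall_condition_residual[OF less.prems(1) hall tight(1,4)]
      by (intro less.hyps) auto
    ultimately show ?thesis
      using capacitated_transversal_Un[OF less.prems(1) tight(1)] by blast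
  next
    case slack
    then obtain j\<^sub>0 where "j\<^sub>0 \<in> J"
      by blast
    have "sum d (N j\<^sub>0) \<noteq> 0"
      using hall[of "{j\<^sub>0}"] \<open>j\<^sub>0 \<in> J\<close> by auto
    then obtain y where "y \<in> N j\<^sub>0" and "d y > 0"
      by (metis gr0I sum.neutral)
    have "card (J - {j\<^sub>0}) < card J"
      using less.prems(1) \<open>j\<^sub>0 \<in> J\<close> by (rule card_Diff1_less)
    then have "\<exists>\<phi>. capacitated_transversal (J - {j\<^sub>0}) N (d(y := d y - 1)) \<phi>"
      using less.prems(1) hall_condition_reduced_capacity[OF slack(2) \<open>j\<^sub>0 \<in> J\<close> \<open>y \<in> N j\<^sub>0\<close>]
      by (intro less.hyps) auto
    then show ?thesis
      using capacitated_transversal_insert[of J j\<^sub>0 y N d] less.prems(1) \<open>j\<^sub>0 \<in> J\<close> \<open>y \<in> N j\<^sub>0\<close> \<open>d y > 0\<close>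
      by blast
  qed
qed

section \<open>Baranyai's theorem\<close>

(* For S \<subseteq> {1..m}, the number of k-subsets of {1..n} whose trace on {1..m} is S. *)
definition baranyai_multiplicity :: "nat \<Rightarrow> nat \<Rightarrow> nat \<Rightarrow> nat set \<Rightarrow> nat" where
  "baranyai_multiplicity n k m S = (if card S \<le> k then (n - m) choose (k - card S) else 0)"

lemma baranyai_multiplicity_Suc:
  assumes "m < n" and "finite S" and "Suc m \<notin> S"
  shows "baranyai_multiplicity n k m S =
           baranyai_multiplicity n k (Suc m) S + baranyai_multiplicity n k (Suc m) (insert (Suc m) S)"
proof (cases "card S < k")
  case True
  obtain a b where "n - m = Suc a" and "k - card S = Suc b"
    using \<open>m < n\<close> True by (metis Suc_diff_Suc)
  then have "n - Suc m = a" and "k - Suc (card S) = b"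
    by simp_all
  with True assms show ?thesis
    by (simp add: baranyai_multiplicity_def \<open>n - m = Suc a\<close> \<open>k - card S = Suc b\<close>)
qed (use assms in \<open>simp add: baranyai_multiplicity_def\<close>)

lemma baranyai_multiplicity_deficit:
  assumes "finite S" and "Suc m \<notin> S"
  shows "baranyai_multiplicity n k m S * (k - card S) =
           (n - m) * baranyai_multiplicity n k (Suc m) (insert (Suc m) S)"
proof (cases "card S < k")
  case True
  then have "(k - card S) * ((n - m) choose (k - card S)) =
               (n - m) * ((n - Suc m) choose (k - Suc (card S)))"
    using times_binomial_minus1_eq[of "k - card S" "n - m"] by simp
  with True assms show ?thesis
    by (simp add: baranyai_multiplicity_def mult.commute)
qed (use assms in \<open>simp add: baranyai_multiplicity_def\<close>)

locale partial_baranyai =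
  fixes s k M m :: nat and P :: "nat \<times> nat \<Rightarrow> nat set"
  assumes row_disjoint: "j < M \<Longrightarrow> disjoint_family_on (\<lambda>i. P (j, i)) {..<s}"
    and row_Union: "j < M \<Longrightarrow> (\<Union>i<s. P (j, i)) = {1..m}"
    and card_fibre: "S \<subseteq> {1..m} \<Longrightarrow>
      card {\<sigma> \<in> {..<M} \<times> {..<s}. P \<sigma> = S} = baranyai_multiplicity (s * k) k m S"
begin

(* The number of k-subsets with trace S on {1..m} that contain m+1: exactly this many rows have to
   put m+1 into a part equal to S. *)
abbreviation capacity :: "nat set \<Rightarrow> nat" where
  "capacity S \<equiv> baranyai_multiplicity (s * k) k (Suc m) (insert (Suc m) S)"

lemma part_subset: "\<sigma> \<in> {..<M} \<times> {..<s} \<Longrightarrow> P \<sigma> \<subseteq> {1..m}"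
  using row_Union by blast

lemma finite_part: "\<sigma> \<in> {..<M} \<times> {..<s} \<Longrightarrow> finite (P \<sigma>)"
  using part_subset finite_subset by blast

lemma part_card_le: "\<sigma> \<in> {..<M} \<times> {..<s} \<Longrightarrow> card (P \<sigma>) \<le> k"
proof (rule ccontr)
  assume \<sigma>: "\<sigma> \<in> {..<M} \<times> {..<s}" and "\<not> card (P \<sigma>) \<le> k"
  then have "card {\<tau> \<in> {..<M} \<times> {..<s}. P \<tau> = P \<sigma>} = 0"
    using card_fibre[OF part_subset] by (simp add: baranyai_multiplicity_def)
  then show False
    using \<sigma> by auto
qed

lemma row_deficit:
  assumes "j < M"
  shows "(\<Sum>i<s. k - card (P (j, i))) = s * k - m"
proof -
  have "(\<Sum>i<s. card (P (j, i))) = card (\<Union>i<s. P (j, i))"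
    using assms row_disjoint finite_part by (intro card_UN_disjoint'[symmetric]) auto
  also have "\<dots> = m"
    using assms row_Union by simp
  finally have "(\<Sum>i<s. card (P (j, i))) = m" .
  moreover have "(\<Sum>i<s. k - card (P (j, i))) = (\<Sum>i<s. k) - (\<Sum>i<s. card (P (j, i)))"
    using assms part_card_le by (intro sum_subtractf_nat) auto
  ultimately show ?thesis
    by simp
qed

lemma deficit_sum:
  assumes "Z \<subseteq> Pow {1..m}"
  shows "(\<Sum>\<sigma> \<in> {\<sigma> \<in> {..<M} \<times> {..<s}. P \<sigma> \<in> Z}. k - card (P \<sigma>)) = (s * k - m) * sum capacity Z"
proof -
  have "finite Z"
    using assms finite_subset by blast
  have Z: "finite S" "Suc m \<notin> S" if "S \<in> Z" for S
  proof -
    have "S \<subseteq> {1..m}"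
      using assms that by blast
    then show "finite S" "Suc m \<notin> S"
      using finite_subset by auto
  qed
  have "(\<Sum>\<sigma> \<in> {\<sigma> \<in> {..<M} \<times> {..<s}. P \<sigma> \<in> Z}. k - card (P \<sigma>)) =
          (\<Sum>S\<in>Z. \<Sum>\<sigma> \<in> {\<sigma> \<in> {..<M} \<times> {..<s}. P \<sigma> = S}. k - card S)"
    using \<open>finite Z\<close>
    by (subst sum.group[symmetric, where g = P and T = Z]) (auto intro!: sum.cong arg_cong[where f = card])
  also have "\<dots> = (\<Sum>S\<in>Z. baranyai_multiplicity (s * k) k m S * (k - card S))"
    using assms card_fibre by (intro sum.cong) auto
  also have "\<dots> = (\<Sum>S\<in>Z. (s * k - m) * capacity S)"
    using Z by (intro sum.cong baranyai_multiplicity_deficit) auto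
  finally show ?thesis
    by (simp add: sum_distrib_left)
qed

lemma capacity_total:
  assumes "m < s * k"
  shows "sum capacity (Pow {1..m}) = M"
proof -
  have "{\<sigma> \<in> {..<M} \<times> {..<s}. P \<sigma> \<in> Pow {1..m}} = {..<M} \<times> {..<s}"
    using part_subset by blast
  then have "(s * k - m) * sum capacity (Pow {1..m}) = (\<Sum>\<sigma> \<in> {..<M} \<times> {..<s}. k - card (P \<sigma>))"
    using deficit_sum[of "Pow {1..m}"] by simp
  also have "\<dots> = (\<Sum>j<M. \<Sum>i<s. k - card (P (j, i)))"
    by (simp add: sum.cartesian_product)
  also have "\<dots> = (s * k - m) * M"
    using row_deficit by simp
  finally show ?thesis
    using assms by simp
qed

abbreviation unfilled_parts :: "nat \<Rightarrow> nat set set" where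
  "unfilled_parts j \<equiv> {P (j, i) | i. i < s \<and> card (P (j, i)) < k}"

lemma hall_condition:
  assumes "m < s * k" and "X \<subseteq> {..<M}"
  shows "card X \<le> sum capacity (\<Union>(unfilled_parts ` X))"
proof -
  let ?Z = "\<Union>(unfilled_parts ` X)"
  have "finite X"
    using assms(2) finite_subset by blast
  have "card X * (s * k - m) = (\<Sum>j\<in>X. \<Sum>i<s. k - card (P (j, i)))"
    using assms(2) row_deficit by (simp add: subset_iff)
  also have "\<dots> = (\<Sum>\<sigma> \<in> X \<times> {..<s}. k - card (P \<sigma>))"
    by (simp add: sum.cartesian_product)
  also have "\<dots> = (\<Sum>\<sigma> \<in> {\<sigma> \<in> X \<times> {..<s}. P \<sigma> \<in> ?Z}. k - card (P \<sigma>))"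
    \<comment> \<open>parts of full size k have deficit 0\<close>
    using \<open>finite X\<close> by (intro sum.mono_neutral_right) force+
  also have "\<dots> \<le> (\<Sum>\<sigma> \<in> {\<sigma> \<in> {..<M} \<times> {..<s}. P \<sigma> \<in> ?Z}. k - card (P \<sigma>))"
    using assms(2) by (intro sum_mono2) auto
  also have "\<dots> = (s * k - m) * sum capacity ?Z"
    using assms(2) part_subset by (intro deficit_sum) auto
  finally show ?thesis
    using assms(1) by (simp add: mult.commute)
qed

lemma selection_exists:
  assumes "m < s * k"
  obtains \<iota> where "\<And>j. j < M \<Longrightarrow> \<iota> j < s"
    and "\<And>S. S \<subseteq> {1..m} \<Longrightarrow> card {j \<in> {..<M}. P (j, \<iota> j) = S} = capacity S"
proof -
  have "\<exists>\<phi>. capacitated_transversal {..<M} unfilled_parts capacity \<phi>"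
    by (rule hall_capacities) (simp_all add: hall_condition[OF assms])
  then obtain \<phi> where \<phi>: "\<forall>j\<in>{..<M}. \<phi> j \<in> unfilled_parts j"
    and \<phi>_fibre: "\<forall>S. card {j \<in> {..<M}. \<phi> j = S} \<le> capacity S"
    unfolding capacitated_transversal_def by blast
  have "\<phi> j \<subseteq> {1..m}" if "j < M" for j
  proof -
    from \<phi> that obtain i where "i < s" "\<phi> j = P (j, i)"
      by blast
    then show ?thesis
      using part_subset that by simp
  qed
  then have \<phi>_Pow: "\<phi> ` {..<M} \<subseteq> Pow {1..m}"
    by auto
  have "(\<Sum>S \<in> Pow {1..m}. card {j \<in> {..<M}. \<phi> j = S}) = card {..<M}"
    unfolding card_eq_sum by (rule sum.group) (use \<phi>_Pow in auto)
  also have "\<dots> = sum capacity (Pow {1..m})"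
    using capacity_total[OF assms] by simp
  finally have sum_eq: "(\<Sum>S \<in> Pow {1..m}. card {j \<in> {..<M}. \<phi> j = S}) = sum capacity (Pow {1..m})" .
  \<comment> \<open>the capacities sum to M, so every capacity bound is attained\<close>
  have \<phi>_fibre_eq: "card {j \<in> {..<M}. \<phi> j = S} = capacity S" if "S \<subseteq> {1..m}" for S
    by (rule sum_mono_inv[OF sum_eq]) (use \<phi>_fibre that in auto)
  define \<iota> where "\<iota> j = (SOME i. i < s \<and> P (j, i) = \<phi> j)" for j
  have \<iota>: "\<iota> j < s \<and> P (j, \<iota> j) = \<phi> j" if "j < M" for j
  proof -
    have "\<exists>i. i < s \<and> P (j, i) = \<phi> j"
      using \<phi> that by blast
    then show ?thesis
      unfolding \<iota>_def by (rule someI_ex)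
  qed
  have "{j \<in> {..<M}. P (j, \<iota> j) = S} = {j \<in> {..<M}. \<phi> j = S}" for S
    using \<iota> by auto
  with \<iota> \<phi>_fibre_eq show ?thesis
    using that[of \<iota>] by simp
qed

context
  fixes \<iota> :: "nat \<Rightarrow> nat"
  assumes selection_less: "\<And>j. j < M \<Longrightarrow> \<iota> j < s"
    and card_selection: "\<And>S. S \<subseteq> {1..m} \<Longrightarrow> card {j \<in> {..<M}. P (j, \<iota> j) = S} = capacity S"
begin

definition extended :: "nat \<times> nat \<Rightarrow> nat set" where
  "extended = (\<lambda>(j, i). if i = \<iota> j then insert (Suc m) (P (j, i)) else P (j, i))"

abbreviation selected :: "nat set \<Rightarrow> (nat \<times> nat) set" where
  "selected S \<equiv> (\<lambda>j. (j, \<iota> j)) ` {j \<in> {..<M}. P (j, \<iota> j) = S}"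

lemma card_selected: "S \<subseteq> {1..m} \<Longrightarrow> card (selected S) = capacity S"
  using card_selection by (simp add: card_image inj_on_def)

lemma fibre_extended_notin:
  assumes "S \<subseteq> {1..m}"
  shows "{\<sigma> \<in> {..<M} \<times> {..<s}. extended \<sigma> = S} = {\<sigma> \<in> {..<M} \<times> {..<s}. P \<sigma> = S} - selected S"
proof (intro set_eqI iffI)
  fix \<sigma> assume "\<sigma> \<in> {\<sigma> \<in> {..<M} \<times> {..<s}. extended \<sigma> = S}"
  then obtain j i where \<sigma>: "\<sigma> = (j, i)" "j < M" "i < s" and ext: "extended (j, i) = S"
    by auto
  have "i \<noteq> \<iota> j"
  proof
    assume "i = \<iota> j"
    then have "Suc m \<in> S"
      using ext by (auto simp: extended_def)
    then show False
      using assms by auto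
  qed
  then show "\<sigma> \<in> {\<sigma> \<in> {..<M} \<times> {..<s}. P \<sigma> = S} - selected S"
    using \<sigma> ext by (auto simp: extended_def)
next
  fix \<sigma> assume "\<sigma> \<in> {\<sigma> \<in> {..<M} \<times> {..<s}. P \<sigma> = S} - selected S"
  then obtain j i where \<sigma>: "\<sigma> = (j, i)" "j < M" "i < s" "P (j, i) = S" and "\<sigma> \<notin> selected S"
    by auto
  then have "i \<noteq> \<iota> j"
    by auto
  then show "\<sigma> \<in> {\<sigma> \<in> {..<M} \<times> {..<s}. extended \<sigma> = S}"
    using \<sigma> by (simp add: extended_def)
qed

lemma fibre_extended_insert:
  assumes "T \<subseteq> {1..m}"
  shows "{\<sigma> \<in> {..<M} \<times> {..<s}. extended \<sigma> = insert (Suc m) T} = selected T"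
proof (intro set_eqI iffI)
  fix \<sigma> assume "\<sigma> \<in> {\<sigma> \<in> {..<M} \<times> {..<s}. extended \<sigma> = insert (Suc m) T}"
  then obtain j i where \<sigma>: "\<sigma> = (j, i)" "j < M" "i < s" and ext: "extended (j, i) = insert (Suc m) T"
    by auto
  have "Suc m \<notin> P (j, i)" and "Suc m \<notin> T"
    using part_subset[of "(j, i)"] \<sigma> assms by auto
  then have "i = \<iota> j" and "P (j, i) = T"
    using ext by (auto simp: extended_def insert_ident split: if_splits)
  then show "\<sigma> \<in> selected T"
    using \<sigma> by auto
next
  fix \<sigma> assume "\<sigma> \<in> selected T"
  then show "\<sigma> \<in> {\<sigma> \<in> {..<M} \<times> {..<s}. extended \<sigma> = insert (Suc m) T}"
    using selection_less by (auto simp: extended_def)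
qed

lemma card_fibre_extended:
  assumes "m < s * k" and S: "S \<subseteq> {1..Suc m}"
  shows "card {\<sigma> \<in> {..<M} \<times> {..<s}. extended \<sigma> = S} = baranyai_multiplicity (s * k) k (Suc m) S"
proof (cases "Suc m \<in> S")
  case False
  then have "S \<subseteq> {1..m}"
    using S by (auto simp: subset_iff le_Suc_eq)
  have "card {\<sigma> \<in> {..<M} \<times> {..<s}. extended \<sigma> = S} =
          card {\<sigma> \<in> {..<M} \<times> {..<s}. P \<sigma> = S} - card (selected S)"
    unfolding fibre_extended_notin[OF \<open>S \<subseteq> {1..m}\<close>]
    by (rule card_Diff_subset) (auto intro: image_subsetI simp: selection_less)
  also have "\<dots> = baranyai_multiplicity (s * k) k (Suc m) S"
    using card_fibre card_selected baranyai_multiplicity_Suc[OF assms(1)] \<open>S \<subseteq> {1..m}\<close> False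
    by (simp add: finite_subset)
  finally show ?thesis .
next
  case True
  define T where "T = S - {Suc m}"
  have "S = insert (Suc m) T" and "T \<subseteq> {1..m}"
    using S True by (auto simp: T_def)
  then show ?thesis
    using fibre_extended_insert[OF \<open>T \<subseteq> {1..m}\<close>] card_selected[OF \<open>T \<subseteq> {1..m}\<close>] by simp
qed

lemma partial_baranyai_extended:
  assumes "m < s * k"
  shows "partial_baranyai s k M (Suc m) extended"
proof
  fix j assume "j < M"
  have "Suc m \<notin> P (j, i)" if "i < s" for i
    using part_subset[of "(j, i)"] \<open>j < M\<close> that by auto
  then show "disjoint_family_on (\<lambda>i. extended (j, i)) {..<s}"
    using row_disjoint[OF \<open>j < M\<close>] by (auto simp: disjoint_family_on_def extended_def)
  have "extended (j, i) = P (j, i) \<union> (if i = \<iota> j then {Suc m} else {})" for i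
    by (simp add: extended_def)
  then have "(\<Union>i<s. extended (j, i)) = (\<Union>i<s. P (j, i)) \<union> (\<Union>i<s. if i = \<iota> j then {Suc m} else {})"
    by (simp add: UN_Un_distrib)
  also have "(\<Union>i<s. if i = \<iota> j then {Suc m} else {}) = {Suc m}"
    using selection_less[OF \<open>j < M\<close>] by (auto split: if_splits)
  finally have "(\<Union>i<s. extended (j, i)) = insert (Suc m) (\<Union>i<s. P (j, i))"
    by simp
  then show "(\<Union>i<s. extended (j, i)) = {1..Suc m}"
    using row_Union[OF \<open>j < M\<close>] by auto
qed (rule card_fibre_extended[OF assms])

end

lemma extension_exists:
  assumes "m < s * k"
  obtains P' where "partial_baranyai s k M (Suc m) P'"
proof -
  obtain \<iota> where "\<And>j. j < M \<Longrightarrow> \<iota> j < s"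
    and "\<And>S. S \<subseteq> {1..m} \<Longrightarrow> card {j \<in> {..<M}. P (j, \<iota> j) = S} = capacity S"
    using selection_exists[OF assms] by blast
  then show ?thesis
    using partial_baranyai_extended[OF _ _ assms] that by blast
qed

lemma card_fibre_complete:
  assumes "m = s * k" and "S \<subseteq> {1..m}"
  shows "card {\<sigma> \<in> {..<M} \<times> {..<s}. P \<sigma> = S} = (if card S = k then 1 else 0)"
  using card_fibre[OF assms(2)] assms(1) by (simp add: baranyai_multiplicity_def)

lemma inj_on_complete:
  assumes "m = s * k"
  shows "inj_on P ({..<M} \<times> {..<s})"
proof (rule inj_onI)
  fix \<sigma> \<tau> assume \<sigma>: "\<sigma> \<in> {..<M} \<times> {..<s}" and "\<tau> \<in> {..<M} \<times> {..<s}" "P \<sigma> = P \<tau>"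
  then have "\<sigma> \<in> {\<sigma>' \<in> {..<M} \<times> {..<s}. P \<sigma>' = P \<sigma>}" "\<tau> \<in> {\<sigma>' \<in> {..<M} \<times> {..<s}. P \<sigma>' = P \<sigma>}"
    by auto
  moreover have "card {\<sigma>' \<in> {..<M} \<times> {..<s}. P \<sigma>' = P \<sigma>} \<le> 1"
    using card_fibre_complete[OF assms part_subset[OF \<sigma>]] by simp
  ultimately show "\<sigma> = \<tau>"
    by (auto simp: card_le_Suc0_iff_eq)
qed

lemma image_complete:
  assumes "m = s * k"
  shows "P ` ({..<M} \<times> {..<s}) = kneser_compl_vertices (s * k) k"
proof (intro equalityI subsetI)
  fix A assume "A \<in> P ` ({..<M} \<times> {..<s})"
  then obtain \<sigma> where "\<sigma> \<in> {..<M} \<times> {..<s}" "A = P \<sigma>"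
    by blast
  then have "A \<subseteq> {1..m}" and "card {\<sigma>' \<in> {..<M} \<times> {..<s}. P \<sigma>' = A} \<noteq> 0"
    using part_subset by auto
  then have "card A = k"
    using card_fibre_complete[OF assms, of A] by (simp split: if_splits)
  with \<open>A \<subseteq> {1..m}\<close> show "A \<in> kneser_compl_vertices (s * k) k"
    using assms by (simp add: kneser_compl_vertices_def)
next
  fix A assume "A \<in> kneser_compl_vertices (s * k) k"
  then have "card {\<sigma> \<in> {..<M} \<times> {..<s}. P \<sigma> = A} = 1"
    using card_fibre_complete[OF assms] assms by (simp add: kneser_compl_vertices_def)
  then obtain \<sigma> where "{\<sigma> \<in> {..<M} \<times> {..<s}. P \<sigma> = A} = {\<sigma>}"
    by (rule card_1_singletonE)
  then show "A \<in> P ` ({..<M} \<times> {..<s})"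
    by blast
qed

end

lemma partial_baranyai_empty:
  assumes "k \<ge> 1"
  shows "partial_baranyai s k ((s * k - 1) choose (k - 1)) 0 (\<lambda>_. {})"
proof
  have "k * ((s * k) choose k) = k * (((s * k - 1) choose (k - 1)) * s)"
    using times_binomial_minus1_eq[of k "s * k"] assms by (simp add: ac_simps)
  then have "(s * k) choose k = ((s * k - 1) choose (k - 1)) * s"
    using assms by simp
  then show "card {\<sigma> \<in> {..<(s * k - 1) choose (k - 1)} \<times> {..<s}. {} = S} = baranyai_multiplicity (s * k) k 0 S"
    if "S \<subseteq> {1..0}" for S
    using that by (simp add: baranyai_multiplicity_def card_cartesian_product)
qed (simp_all add: disjoint_family_on_def)

lemma partial_baranyai_exists:
  assumes "k \<ge> 1" and "m \<le> s * k"
  shows "\<exists>P. partial_baranyai s k ((s * k - 1) choose (k - 1)) m P"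
  using assms(2)
proof (induction m)
  case 0
  show ?case
    using partial_baranyai_empty[OF assms(1)] by blast
next
  case (Suc m)
  then obtain P where "partial_baranyai s k ((s * k - 1) choose (k - 1)) m P"
    by auto
  then show ?case
    using partial_baranyai.extension_exists Suc.prems by (metis Suc_le_lessD)
qed

theorem baranyai:
  assumes "k \<ge> 1"
  obtains P where
    "\<And>j. j < (s * k - 1) choose (k - 1) \<Longrightarrow> disjoint_family_on (\<lambda>i. P (j, i)) {..<s}"
    "bij_betw P ({..<(s * k - 1) choose (k - 1)} \<times> {..<s}) (kneser_compl_vertices (s * k) k)"
proof -
  obtain P where "partial_baranyai s k ((s * k - 1) choose (k - 1)) (s * k) P"
    using partial_baranyai_exists[OF assms order_refl] by blast
  then interpret partial_baranyai s k "(s * k - 1) choose (k - 1)" "s * k" P .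
  have "bij_betw P ({..<(s * k - 1) choose (k - 1)} \<times> {..<s}) (kneser_compl_vertices (s * k) k)"
    using inj_on_complete image_complete by (simp add: bij_betw_def)
  then show ?thesis
    using that row_disjoint by blast
qed

section \<open>Colourings, cliques and minors\<close>

lemma chromatic_number_le: "proper_colouring V E c f \<Longrightarrow> chromatic_number V E \<le> c"
  unfolding chromatic_number_def by (auto intro: Least_le)

lemma kneser_compl_chromatic_number_le:
  assumes "k \<ge> 1"
  shows "chromatic_number (kneser_compl_vertices (s * k) k) kneser_compl_adj \<le> (s * k - 1) choose (k - 1)"
proof -
  let ?cells = "{..<(s * k - 1) choose (k - 1)} \<times> {..<s}"
  obtain P where P_row: "\<And>j. j < (s * k - 1) choose (k - 1) \<Longrightarrow> disjoint_family_on (\<lambda>i. P (j, i)) {..<s}"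
    and P_bij: "bij_betw P ?cells (kneser_compl_vertices (s * k) k)"
    using baranyai[OF assms] by blast
  define f where "f A = fst (inv_into ?cells P A)" for A
  have cell: "inv_into ?cells P A \<in> ?cells" "P (inv_into ?cells P A) = A"
    if "A \<in> kneser_compl_vertices (s * k) k" for A
    using that P_bij bij_betw_inv_into_right[OF P_bij that] by (auto simp: bij_betw_def intro: inv_into_into)
  have "proper_colouring (kneser_compl_vertices (s * k) k) kneser_compl_adj ((s * k - 1) choose (k - 1)) f"
    unfolding proper_colouring_def
  proof (intro conjI ballI impI)
    fix A assume "A \<in> kneser_compl_vertices (s * k) k"
    then show "f A < (s * k - 1) choose (k - 1)"
      using cell(1) by (auto simp: f_def mem_Times_iff)
  next
    fix A B assume A: "A \<in> kneser_compl_vertices (s * k) k" and B: "B \<in> kneser_compl_vertices (s * k) k"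
      and "kneser_compl_adj A B"
    then have "A \<noteq> B" and "A \<inter> B \<noteq> {}"
      by (auto simp: kneser_compl_adj_def)
    show "f A \<noteq> f B"
    proof
      assume "f A = f B"
      then obtain j i i' where j: "j < (s * k - 1) choose (k - 1)" "i < s" "i' < s"
        and AB: "A = P (j, i)" "B = P (j, i')"
        using cell[OF A] cell[OF B] unfolding f_def by (metis SigmaE fst_conv lessThan_iff)
      then have "i \<noteq> i'"
        using \<open>A \<noteq> B\<close> by auto
      then show False
        using P_row[OF j(1)] j AB \<open>A \<inter> B \<noteq> {}\<close> by (auto simp: disjoint_family_on_def)
    qed
  qed
  then show ?thesis
    by (rule chromatic_number_le)
qed

lemma finite_kneser_compl_vertices: "finite (kneser_compl_vertices n k)"
  unfolding kneser_compl_vertices_def by (rule finite_subset[of _ "Pow {1..n}"]) auto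

lemma card_kneser_compl_star:
  assumes "k \<ge> 1" and "n \<ge> 1"
  shows "card {A \<in> kneser_compl_vertices n k. 1 \<in> A} = (n - 1) choose (k - 1)"
proof -
  let ?B = "{B. B \<subseteq> {2..n} \<and> card B = k - 1}"
  have "{A \<in> kneser_compl_vertices n k. 1 \<in> A} = insert 1 ` ?B"
  proof (intro equalityI subsetI)
    fix A assume A: "A \<in> {A \<in> kneser_compl_vertices n k. 1 \<in> A}"
    then have "A - {1} \<in> ?B" and "A = insert 1 (A - {1})"
      by (auto simp: kneser_compl_vertices_def)
    then show "A \<in> insert 1 ` ?B"
      by blast
  next
    fix A assume "A \<in> insert 1 ` ?B"
    then obtain B where "B \<subseteq> {2..n}" "card B = k - 1" "A = insert 1 B"
      by blast
    moreover have "finite B" and "1 \<notin> B"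
      using \<open>B \<subseteq> {2..n}\<close> finite_subset by auto
    ultimately show "A \<in> {A \<in> kneser_compl_vertices n k. 1 \<in> A}"
      using assms by (auto simp: kneser_compl_vertices_def)
  qed
  moreover have "inj_on (insert 1) ?B"
  proof (rule inj_onI)
    fix B B' assume "B \<in> ?B" "B' \<in> ?B" "insert 1 B = insert 1 B'"
    moreover have "1 \<notin> B" "1 \<notin> B'"
      using \<open>B \<in> ?B\<close> \<open>B' \<in> ?B\<close> by auto
    ultimately show "B = B'"
      by (simp add: insert_ident)
  qed
  ultimately show ?thesis
    by (simp add: card_image n_subsets)
qed

definition clique :: "'a set \<Rightarrow> ('a \<Rightarrow> 'a \<Rightarrow> bool) \<Rightarrow> 'a set \<Rightarrow> bool" where
  "clique V E K \<longleftrightarrow> K \<subseteq> V \<and> (\<forall>u\<in>K. \<forall>v\<in>K. u \<noteq> v \<longrightarrow> E u v)"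

lemma kneser_compl_star_clique:
  "clique (kneser_compl_vertices n k) kneser_compl_adj {A \<in> kneser_compl_vertices n k. 1 \<in> A}"
  by (auto simp: clique_def kneser_compl_adj_def)

lemma clique_enumeration:
  assumes "clique V E K" and "finite K" and "t \<le> card K"
  obtains e where "inj_on e {..<t}" and "e ` {..<t} \<subseteq> V"
    and "\<And>i j. i < t \<Longrightarrow> j < t \<Longrightarrow> i \<noteq> j \<Longrightarrow> E (e i) (e j)"
proof -
  obtain e where e: "inj_on e {..<t}" "e ` {..<t} \<subseteq> K"
    using card_le_inj[of "{..<t}" K] assms(2,3) by auto
  have "E (e i) (e j)" if "i < t" "j < t" "i \<noteq> j" for i j
  proof -
    have "e i \<noteq> e j"
      using inj_onD[OF e(1)] that by auto
    moreover have "e i \<in> K" "e j \<in> K"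
      using e(2) that by auto
    ultimately show ?thesis
      using assms(1) by (simp add: clique_def)
  qed
  moreover have "e ` {..<t} \<subseteq> V"
    using e(2) assms(1) by (auto simp: clique_def)
  ultimately show ?thesis
    using that e(1) by blast
qed

lemma signed_minor_of_clique:
  assumes "clique V E K" and "finite K" and "t \<le> card K"
  shows "signed_minor {..<t} (\<lambda>x y. x \<noteq> y) (\<lambda>_ _. False) V E (\<lambda>_ _. False)"
proof -
  obtain e where e: "inj_on e {..<t}" "e ` {..<t} \<subseteq> V"
    and adj: "\<And>i j. i < t \<Longrightarrow> j < t \<Longrightarrow> i \<noteq> j \<Longrightarrow> E (e i) (e j)"
    using clique_enumeration[OF assms] by blast
  have "connected_in {v} R" for v and R :: "'a \<Rightarrow> 'a \<Rightarrow> bool"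
    by (simp add: connected_in_def)
  then show ?thesis
    unfolding signed_minor_def using e adj
    by (intro exI[of _ "\<lambda>_. False"] exI[of _ "\<lambda>x. {e x}"]) (auto simp: switched_sign_def inj_on_def)
qed

lemma strongly_1_shallow_minor_of_clique:
  assumes "clique V E K" and "finite K" and "t \<le> card K"
  shows "strongly_1_shallow_minor V E t"
proof -
  obtain e where e: "inj_on e {..<t}" "e ` {..<t} \<subseteq> V"
    and adj: "\<And>i j. i < t \<Longrightarrow> j < t \<Longrightarrow> i \<noteq> j \<Longrightarrow> E (e i) (e j)"
    using clique_enumeration[OF assms] by blast
  then show ?thesis
    unfolding strongly_1_shallow_minor_def
    by (intro exI[of _ e] exI[of _ "\<lambda>_. {}"]) (auto simp: bag_ports_def inj_on_def)
qed

lemma signed_minor_card_le: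
  assumes "signed_minor {..<t} H \<pi> V E \<sigma>" and "finite V"
  shows "t \<le> card V"
proof -
  obtain sw B where B: "\<forall>x\<in>{..<t}. B x \<subseteq> V \<and> connected_in (B x) (\<lambda>u v. E u v \<and> switched_sign \<sigma> sw u v)"
    and disjoint: "\<forall>x\<in>{..<t}. \<forall>y\<in>{..<t}. x \<noteq> y \<longrightarrow> B x \<inter> B y = {}"
    using assms(1) unfolding signed_minor_def by blast
  define r where "r x = (SOME v. v \<in> B x)" for x
  have r: "r x \<in> B x \<and> r x \<in> V" if "x < t" for x
  proof -
    have "B x \<noteq> {}" and "B x \<subseteq> V"
      using B that by (auto simp: connected_in_def)
    then have "r x \<in> B x"
      unfolding r_def by (simp add: some_in_eq)
    with \<open>B x \<subseteq> V\<close> show ?thesis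
      by auto
  qed
  have "inj_on r {..<t}"
  proof (rule inj_onI)
    fix x y assume "x \<in> {..<t}" "y \<in> {..<t}" "r x = r y"
    then have "B x \<inter> B y \<noteq> {}"
      using r by (metis disjoint_iff lessThan_iff)
    then show "x = y"
      using disjoint \<open>x \<in> {..<t}\<close> \<open>y \<in> {..<t}\<close> by blast
  qed
  moreover have "r ` {..<t} \<subseteq> V"
    using r by auto
  ultimately show ?thesis
    using card_inj_on_le[OF _ _ assms(2)] by fastforce
qed

lemma odd_hadwiger_ge:
  assumes "finite V" and "signed_minor {..<t} (\<lambda>x y. x \<noteq> y) (\<lambda>_ _. False) V E (\<lambda>_ _. False)"
  shows "t \<le> odd_hadwiger V E"
  unfolding odd_hadwiger_def
  by (rule Greatest_le_nat[where b = "card V"]) (use assms signed_minor_card_le in auto)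

theorem lemma2p2:
  fixes s k :: nat
  assumes "s \<ge> 2" and "k \<ge> 2"
  shows "chromatic_number (kneser_compl_vertices (s * k) k) kneser_compl_adj
           \<le> odd_hadwiger (kneser_compl_vertices (s * k) k) kneser_compl_adj
         \<and> strongly_1_shallow_minor (kneser_compl_vertices (s * k) k) kneser_compl_adj
             (chromatic_number (kneser_compl_vertices (s * k) k) kneser_compl_adj)"
proof -
  let ?V = "kneser_compl_vertices (s * k) k"
  let ?K = "{A \<in> ?V. 1 \<in> A}"
  have "finite ?K"
    using finite_kneser_compl_vertices by simp
  have "chromatic_number ?V kneser_compl_adj \<le> card ?K"
    using kneser_compl_chromatic_number_le[of k s] card_kneser_compl_star[of k "s * k"] assms by simp
  moreover have "card ?K \<le> odd_hadwiger ?V kneser_compl_adj"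
    using kneser_compl_star_clique \<open>finite ?K\<close>
    by (intro odd_hadwiger_ge finite_kneser_compl_vertices signed_minor_of_clique) auto
  moreover have "strongly_1_shallow_minor ?V kneser_compl_adj (chromatic_number ?V kneser_compl_adj)"
    using kneser_compl_star_clique \<open>finite ?K\<close> calculation(1)
    by (rule strongly_1_shallow_minor_of_clique)
  ultimately show ?thesis
    by simp
qed

end
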